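(* Let $(\mathcal V,\otimes,\lambda)$ be a colax Monoidal category. The functor $\mathrm{Coalg}\to\mathrm{hCoalg}$ from the category of ordinary coalgebras in $\mathcal V$ to the category of homotopy coalgebras in $\mathcal V$, sending a coalgebra to its associated homotopy coalgebra and a coalgebra morphism $t:C\to G$ to the family $(t^{\otimes I}:C^{\otimes I}\to G^{\otimes I})_{I\in\mathbb N}$, is full and faithful.
   Context: $\mathcal O_{sk}$: objects $\mathbf n=\{1<\dots<n\}$, $n\ge0$ (identified with $n\in\mathbb N$), morphisms non-decreasing maps; $\sqcup$ ordered disjoint union; composition diagrammatic. $\mathcal V$ has structure morphisms $\lambda^\phi:\otimes^{j\in J}\otimes^{i\in\phi^{-1}j}X_i\to\otimes^{i\in I}X_i$ for $\phi:I\to J$ in $\mathcal O_{sk}$ (colax Monoidal: opposite of a lax Monoidal structure on $\mathcal V^{op}$). An ordinary coalgebra: $C$ with $\Delta_I:C\to C^{\otimes I}$, $\Delta_{\mathbf1}=\mathrm{id}$, $\Delta_I=\Delta_J(\otimes_j\Delta_{\phi^{-1}j})\lambda^\phi$ for all $\phi:I\to J$; a coalgebra morphism $t$ satisfies $\Delta_It^{\otimes I}=t\Delta_I$. A homotopy coalgebra $(C,\chi)$ is a functor $C:\mathcal O_{sk}^{op}\to\mathcal V$ with morphisms $\chi^I_{N_1,\dots,N_I}:\otimes^{i\in I}C(N_i)\to C(\sqcup_iN_i)$ natural in the $N_i$, $\chi^{\mathbf1}=\mathrm{id}$, $(\otimes^{j}\chi^{\phi^{-1}j})\chi^J=\lambda^\phi\chi^I$.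 A morphism $t:(C,\chi)\to(G,\gamma)$ in $\mathrm{hCoalg}$ is a family $t(k):C(k)\to G(k)$ natural in $\mathcal O_{sk}^{op}$ and with $\chi^I t=(\otimes^I t)\gamma^I$. The homotopy coalgebra associated with an ordinary coalgebra $C$ has $C(J)=C^{\otimes J}$, $C(\phi^{op})=(\otimes_j\Delta_{\phi^{-1}j})\lambda^\phi$, $\chi^I_{n_1,\dots,n_I}=\lambda^{\sqcup_i\mathbf n_i\to I}$. *)

theory Defs
  imports Main
begin

text \<open>Object n of O_sk is the ordinal {0<...<n-1} (the paper's {1<...<n}, shifted).
A morphism phi : n -> m is represented literally by its list of values
[phi 0, ..., phi (n-1)]: a sorted list of length n with entries < m.\<close>

definition osk :: "nat \<Rightarrow> nat \<Rightarrow> nat list \<Rightarrow> bool" where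
  "osk n m phi \<longleftrightarrow> length phi = n \<and> sorted phi \<and> (\<forall>x\<in>set phi. x < m)"

definition oid :: "nat \<Rightarrow> nat list" where "oid n = [0..<n]"
definition oterm :: "nat \<Rightarrow> nat list" where "oterm n = replicate n 0"

definition ocomp :: "nat list \<Rightarrow> nat list \<Rightarrow> nat list" where
  "ocomp phi psi = map (\<lambda>i. psi ! i) phi"

text \<open>the subfamily (x_i)_{i in phi^{-1} j} of a family xs indexed by the domain of phi\<close>
definition preim :: "nat list \<Rightarrow> nat \<Rightarrow> 'a list \<Rightarrow> 'a list" where
  "preim phi j xs = map (\<lambda>i. xs ! i) (filter (\<lambda>i. phi ! i = j) [0..<length phi])"

definition fib :: "nat list \<Rightarrow> nat \<Rightarrow> nat" where
  "fib phi j = length (filter (\<lambda>x. x = j) phi)"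

text \<open>For phi : I -> J, psi : J -> K and k in K, the restriction
phi_k : (phi psi)^{-1} k -> psi^{-1} k (both fibres identified with ordinals
in order); its codomain has size fib psi k.\<close>
definition orestr :: "nat list \<Rightarrow> nat list \<Rightarrow> nat \<Rightarrow> nat list" where
  "orestr phi psi k = map (\<lambda>x. x - length (filter (\<lambda>y. y < k) psi)) (preim (ocomp phi psi) k phi)"

text \<open>ordered disjoint union of maps phi_i : N_i -> M_i, given as list of pairs (phi_i, M_i)\<close>
fun odunion :: "(nat list \<times> nat) list \<Rightarrow> nat list" where
  "odunion [] = []"
| "odunion ((phi, M) # ps) = phi @ map (\<lambda>x. x + M) (odunion ps)"

text \<open>the canonical map  n_1 \<squnion> ... \<squnion> n_I -> I\<close>
definition oblocks :: "nat list \<Rightarrow> nat list" where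
  "oblocks Ns = concat (map (\<lambda>i. replicate (Ns ! i) i) [0..<length Ns])"

text \<open>A category with objects in 'o and morphisms in 'm, composition diagrammatic
(mcomp f g = "f then g"), with a tensor product of finite (ordinal-indexed, i.e. list)
families of objects and morphisms, and structure morphisms
mlam phi m Xs = lambda^phi : tensor_{j<m} tensor_{i in phi^{-1} j} X_i -> tensor_i X_i.\<close>

record ('o, 'm) mcat =
  mob :: "'o set"
  mmor :: "'m set"
  msrc :: "'m \<Rightarrow> 'o"
  mtgt :: "'m \<Rightarrow> 'o"
  mcomp :: "'m \<Rightarrow> 'm \<Rightarrow> 'm"
  mid :: "'o \<Rightarrow> 'm"
  mten :: "'o list \<Rightarrow> 'o"
  mtenm :: "'m list \<Rightarrow> 'm"
  mlam :: "nat list \<Rightarrow> nat \<Rightarrow> 'o list \<Rightarrow> 'm"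

definition hom :: "('o, 'm) mcat \<Rightarrow> 'o \<Rightarrow> 'o \<Rightarrow> 'm \<Rightarrow> bool" where
  "hom V a b f \<longleftrightarrow> f \<in> mmor V \<and> msrc V f = a \<and> mtgt V f = b"

definition is_category :: "('o, 'm) mcat \<Rightarrow> bool" where
  "is_category V \<longleftrightarrow>
     (\<forall>f\<in>mmor V. msrc V f \<in> mob V \<and> mtgt V f \<in> mob V)
   \<and> (\<forall>a\<in>mob V. hom V a a (mid V a))
   \<and> (\<forall>f\<in>mmor V. \<forall>g\<in>mmor V. mtgt V f = msrc V g \<longrightarrow>
         hom V (msrc V f) (mtgt V g) (mcomp V f g))
   \<and> (\<forall>f\<in>mmor V. \<forall>g\<in>mmor V. \<forall>h\<in>mmor V. mtgt V f = msrc V g \<longrightarrow> mtgt V g = msrc V h \<longrightarrow>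
         mcomp V (mcomp V f g) h = mcomp V f (mcomp V g h))
   \<and> (\<forall>f\<in>mmor V. mcomp V (mid V (msrc V f)) f = f \<and> mcomp V f (mid V (mtgt V f)) = f)"

definition colax_Monoidal :: "('o, 'm) mcat \<Rightarrow> bool" where
  "colax_Monoidal V \<longleftrightarrow> is_category V
   \<comment> \<open>tensor is a functor V^I -> V for every I, with tensor over 1 the identity\<close>
   \<and> (\<forall>Xs. set Xs \<subseteq> mob V \<longrightarrow> mten V Xs \<in> mob V)
   \<and> (\<forall>fs. set fs \<subseteq> mmor V \<longrightarrow>
         hom V (mten V (map (msrc V) fs)) (mten V (map (mtgt V) fs)) (mtenm V fs))
   \<and> (\<forall>Xs. set Xs \<subseteq> mob V \<longrightarrow> mtenm V (map (mid V) Xs) = mid V (mten V Xs))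
   \<and> (\<forall>fs gs. set fs \<subseteq> mmor V \<longrightarrow> set gs \<subseteq> mmor V \<longrightarrow> length fs = length gs \<longrightarrow>
         map (mtgt V) fs = map (msrc V) gs \<longrightarrow>
         mtenm V (map2 (mcomp V) fs gs) = mcomp V (mtenm V fs) (mtenm V gs))
   \<and> (\<forall>X. mten V [X] = X) \<and> (\<forall>f. mtenm V [f] = f)
   \<comment> \<open>lambda^phi is a morphism of the right type\<close>
   \<and> (\<forall>n m phi Xs. osk n m phi \<longrightarrow> length Xs = n \<longrightarrow> set Xs \<subseteq> mob V \<longrightarrow>
         hom V (mten V (map (\<lambda>j. mten V (preim phi j Xs)) [0..<m])) (mten V Xs) (mlam V phi m Xs))
   \<comment> \<open>naturality of lambda^phi\<close>
   \<and> (\<forall>n m phi fs. osk n m phi \<longrightarrow> length fs = n \<longrightarrow> set fs \<subseteq> mmor V \<longrightarrow>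
         mcomp V (mtenm V (map (\<lambda>j. mtenm V (preim phi j fs)) [0..<m])) (mlam V phi m (map (mtgt V) fs))
         = mcomp V (mlam V phi m (map (msrc V) fs)) (mtenm V fs))
   \<comment> \<open>unit conditions lambda^{id_I} = id, lambda^{I -> 1} = id\<close>
   \<and> (\<forall>Xs. set Xs \<subseteq> mob V \<longrightarrow> mlam V (oid (length Xs)) (length Xs) Xs = mid V (mten V Xs))
   \<and> (\<forall>Xs. set Xs \<subseteq> mob V \<longrightarrow> mlam V (oterm (length Xs)) 1 Xs = mid V (mten V Xs))
   \<comment> \<open>coherence for I --phi--> J --psi--> K (opposite of the lax Monoidal axiom)\<close>
   \<and> (\<forall>n m k phi psi Xs. osk n m phi \<longrightarrow> osk m k psi \<longrightarrow> length Xs = n \<longrightarrow> set Xs \<subseteq> mob V \<longrightarrow>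
         mcomp V (mtenm V (map (\<lambda>c. mlam V (orestr phi psi c) (fib psi c) (preim (ocomp phi psi) c Xs)) [0..<k]))
                 (mlam V (ocomp phi psi) k Xs)
         = mcomp V (mlam V psi k (map (\<lambda>j. mten V (preim phi j Xs)) [0..<m])) (mlam V phi m Xs))"

definition tpow :: "('o, 'm) mcat \<Rightarrow> 'o \<Rightarrow> nat \<Rightarrow> 'o" where
  "tpow V C n = mten V (replicate n C)"

definition tpowm :: "('o, 'm) mcat \<Rightarrow> 'm \<Rightarrow> nat \<Rightarrow> 'm" where
  "tpowm V t n = mtenm V (replicate n t)"

definition coalg :: "('o, 'm) mcat \<Rightarrow> 'o \<Rightarrow> (nat \<Rightarrow> 'm) \<Rightarrow> bool" where
  "coalg V C D \<longleftrightarrow> C \<in> mob V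
   \<and> (\<forall>n. hom V C (tpow V C n) (D n))
   \<and> D 1 = mid V C
   \<and> (\<forall>n m phi. osk n m phi \<longrightarrow>
        D n = mcomp V (mcomp V (D m) (mtenm V (map (\<lambda>j. D (fib phi j)) [0..<m])))
                      (mlam V phi m (replicate n C)))"

definition coalg_mor :: "('o, 'm) mcat \<Rightarrow> 'o \<Rightarrow> (nat \<Rightarrow> 'm) \<Rightarrow> 'o \<Rightarrow> (nat \<Rightarrow> 'm) \<Rightarrow> 'm \<Rightarrow> bool" where
  "coalg_mor V C D G E t \<longleftrightarrow> hom V C G t
   \<and> (\<forall>n. mcomp V (D n) (tpowm V t n) = mcomp V t (E n))"

text \<open>A homotopy coalgebra: object map Cob : nat -> 'o, morphism map
Cmor phi m = C(phi^op) : C(m) -> C(n) for phi : n -> m, and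
chi Ns = chi^I_{N_1,...,N_I} : tensor_i C(N_i) -> C(N_1 + ... + N_I).\<close>

definition hcoalg :: "('o, 'm) mcat \<Rightarrow> (nat \<Rightarrow> 'o) \<Rightarrow> (nat list \<Rightarrow> nat \<Rightarrow> 'm) \<Rightarrow> (nat list \<Rightarrow> 'm) \<Rightarrow> bool" where
  "hcoalg V Cob Cmor chi \<longleftrightarrow>
     (\<forall>n. Cob n \<in> mob V)
   \<and> (\<forall>n m phi. osk n m phi \<longrightarrow> hom V (Cob m) (Cob n) (Cmor phi m))
   \<and> (\<forall>n. Cmor (oid n) n = mid V (Cob n))
   \<and> (\<forall>n m k phi psi. osk n m phi \<longrightarrow> osk m k psi \<longrightarrow>
        Cmor (ocomp phi psi) k = mcomp V (Cmor psi k) (Cmor phi m))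
   \<and> (\<forall>Ns. hom V (mten V (map Cob Ns)) (Cob (sum_list Ns)) (chi Ns))
   \<comment> \<open>naturality of chi in the N_i\<close>
   \<and> (\<forall>ps. (\<forall>(phi, M)\<in>set ps. osk (length phi) M phi) \<longrightarrow>
        mcomp V (mtenm V (map (\<lambda>(phi, M). Cmor phi M) ps)) (chi (map (\<lambda>(phi, M). length phi) ps))
        = mcomp V (chi (map snd ps)) (Cmor (odunion ps) (sum_list (map snd ps))))
   \<and> (\<forall>N. chi [N] = mid V (Cob N))
   \<and> (\<forall>Ns m phi. osk (length Ns) m phi \<longrightarrow>
        mcomp V (mtenm V (map (\<lambda>j. chi (preim phi j Ns)) [0..<m]))
                (chi (map (\<lambda>j. sum_list (preim phi j Ns)) [0..<m]))
        = mcomp V (mlam V phi m (map Cob Ns)) (chi Ns))"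

definition hcoalg_mor :: "('o, 'm) mcat \<Rightarrow> (nat \<Rightarrow> 'o) \<Rightarrow> (nat list \<Rightarrow> nat \<Rightarrow> 'm) \<Rightarrow> (nat list \<Rightarrow> 'm)
    \<Rightarrow> (nat \<Rightarrow> 'o) \<Rightarrow> (nat list \<Rightarrow> nat \<Rightarrow> 'm) \<Rightarrow> (nat list \<Rightarrow> 'm) \<Rightarrow> (nat \<Rightarrow> 'm) \<Rightarrow> bool" where
  "hcoalg_mor V Cob Cmor chi Gob Gmor gam t \<longleftrightarrow>
     (\<forall>k. hom V (Cob k) (Gob k) (t k))
   \<and> (\<forall>n m phi. osk n m phi \<longrightarrow> mcomp V (Cmor phi m) (t n) = mcomp V (t m) (Gmor phi m))
   \<and> (\<forall>Ns. mcomp V (chi Ns) (t (sum_list Ns)) = mcomp V (mtenm V (map t Ns)) (gam Ns))"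

definition assoc_ob :: "('o, 'm) mcat \<Rightarrow> 'o \<Rightarrow> nat \<Rightarrow> 'o" where
  "assoc_ob V C J = tpow V C J"

definition assoc_mor :: "('o, 'm) mcat \<Rightarrow> 'o \<Rightarrow> (nat \<Rightarrow> 'm) \<Rightarrow> nat list \<Rightarrow> nat \<Rightarrow> 'm" where
  "assoc_mor V C D phi m =
     mcomp V (mtenm V (map (\<lambda>j. D (fib phi j)) [0..<m])) (mlam V phi m (replicate (length phi) C))"

definition assoc_chi :: "('o, 'm) mcat \<Rightarrow> 'o \<Rightarrow> nat list \<Rightarrow> 'm" where
  "assoc_chi V C Ns = mlam V (oblocks Ns) (length Ns) (replicate (sum_list Ns) C)"

end

theory Submission
  imports Defs
begin

text \<open>Faithfulness holds because \<open>t = t\<^sup>\<otimes>\<^sup>1\<close>. For fullness, let \<open>s\<close> be a morphism of the associated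
homotopy coalgebras. Compatibility with \<open>\<chi>\<close> at the family \<open>(1,\<dots>,1)\<close>, where \<open>\<chi> = \<lambda>\<^sup>i\<^sup>d = id\<close>,
forces \<open>s(k) = s(1)\<^sup>\<otimes>\<^sup>k\<close>; naturality of \<open>s\<close> along the terminal map \<open>k \<rightarrow> 1\<close>, whose image under
the associated functor is \<open>\<Delta>\<^sub>k\<close>, then says that \<open>s(1)\<close> is a coalgebra morphism.\<close>

lemma colax_Monoidal_is_category: "colax_Monoidal V \<Longrightarrow> is_category V"
  unfolding colax_Monoidal_def by blast

lemma comp_id_left:
  assumes "is_category V" and "hom V a b f"
  shows "mcomp V (mid V a) f = f"
  using assms unfolding is_category_def hom_def by metis

lemma comp_id_right:
  assumes "is_category V" and "hom V a b f"
  shows "mcomp V f (mid V b) = f"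
  using assms unfolding is_category_def hom_def by metis

lemma tpow_one: "colax_Monoidal V \<Longrightarrow> tpow V C 1 = C"
  unfolding tpow_def colax_Monoidal_def by simp

lemma tpowm_one: "colax_Monoidal V \<Longrightarrow> tpowm V t 1 = t"
  unfolding tpowm_def colax_Monoidal_def by simp

lemma hom_tpowm:
  assumes "colax_Monoidal V" and "hom V A B t"
  shows "hom V (tpow V A k) (tpow V B k) (tpowm V t k)"
proof -
  have "\<forall>fs. set fs \<subseteq> mmor V \<longrightarrow>
      hom V (mten V (map (msrc V) fs)) (mten V (map (mtgt V) fs)) (mtenm V fs)"
    using assms(1) unfolding colax_Monoidal_def by (elim conjE)
  moreover have "set (replicate k t) \<subseteq> mmor V"
    using assms(2) unfolding hom_def by auto
  ultimately show ?thesis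
    using assms(2) unfolding hom_def tpow_def tpowm_def by (simp add: map_replicate_const)
qed

lemma lam_oid_replicate:
  assumes "colax_Monoidal V" and "X \<in> mob V"
  shows "mlam V (oid k) k (replicate k X) = mid V (tpow V X k)"
proof -
  have "\<forall>Xs. set Xs \<subseteq> mob V \<longrightarrow> mlam V (oid (length Xs)) (length Xs) Xs = mid V (mten V Xs)"
    using assms(1) unfolding colax_Monoidal_def by blast
  from this[rule_format, of "replicate k X"] show ?thesis
    using assms(2) unfolding tpow_def by (simp add: set_replicate_conv_if)
qed

lemma lam_oterm_replicate:
  assumes "colax_Monoidal V" and "X \<in> mob V"
  shows "mlam V (oterm k) 1 (replicate k X) = mid V (tpow V X k)"
proof -
  have "\<forall>Xs. set Xs \<subseteq> mob V \<longrightarrow> mlam V (oterm (length Xs)) 1 Xs = mid V (mten V Xs)"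
    using assms(1) unfolding colax_Monoidal_def by blast
  from this[rule_format, of "replicate k X"] show ?thesis
    using assms(2) unfolding tpow_def by (simp add: set_replicate_conv_if)
qed

lemma osk_oterm: "osk n 1 (oterm n)"
  unfolding osk_def oterm_def by (auto simp: sorted_iff_nth_mono)

lemma fib_oterm: "fib (oterm n) 0 = n"
  unfolding fib_def oterm_def by (induct n) auto

lemma oblocks_replicate_one: "oblocks (replicate k (Suc 0)) = oid k"
proof -
  have "map (\<lambda>i. replicate (replicate k (Suc 0) ! i) i) [0..<k] = map (\<lambda>i. [i]) [0..<k]"
    by (rule map_cong) auto
  moreover have "concat (map (\<lambda>i. [i]) xs) = xs" for xs :: "nat list"
    by (induct xs) auto
  ultimately show ?thesis
    unfolding oblocks_def oid_def length_replicate by (simp only:)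
qed

lemma assoc_chi_replicate_one:
  assumes "colax_Monoidal V" and "C \<in> mob V"
  shows "assoc_chi V C (replicate k 1) = mid V (tpow V C k)"
  using lam_oid_replicate[OF assms]
  by (simp add: assoc_chi_def oblocks_replicate_one sum_list_replicate)

lemma assoc_mor_oterm:
  assumes "colax_Monoidal V" and "coalg V C D"
  shows "assoc_mor V C D (oterm n) 1 = D n"
proof -
  have "C \<in> mob V" and D: "hom V C (tpow V C n) (D n)"
    using assms(2) unfolding coalg_def by blast+
  then have "assoc_mor V C D (oterm n) 1 = mcomp V (mtenm V [D n]) (mid V (tpow V C n))"
    using lam_oterm_replicate[OF assms(1)] fib_oterm
    by (simp add: assoc_mor_def oterm_def)
  also have "\<dots> = D n"
    using assms(1) D comp_id_right[OF colax_Monoidal_is_category[OF assms(1)]]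
    unfolding colax_Monoidal_def by simp
  finally show ?thesis .
qed

lemma hcoalg_mor_assoc_tpowm:
  assumes V: "colax_Monoidal V" and "C \<in> mob V" and "G \<in> mob V"
    and s: "hcoalg_mor V (assoc_ob V C) Cmor (assoc_chi V C) (assoc_ob V G) Gmor (assoc_chi V G) s"
  shows "s k = tpowm V (s 1) k"
proof -
  have cat: "is_category V" using colax_Monoidal_is_category[OF V] .
  have s_hom: "hom V (tpow V C n) (tpow V G n) (s n)" for n
    using s unfolding hcoalg_mor_def assoc_ob_def by blast
  have "mcomp V (assoc_chi V C Ns) (s (sum_list Ns))
      = mcomp V (mtenm V (map s Ns)) (assoc_chi V G Ns)" for Ns
    using s unfolding hcoalg_mor_def by blast
  from this[of "replicate k 1"]
  have chi_ones: "mcomp V (mid V (tpow V C k)) (s k) = mcomp V (tpowm V (s 1) k) (mid V (tpow V G k))"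
    using assoc_chi_replicate_one[OF V] assms(2,3)
    by (simp add: sum_list_replicate tpowm_def)
  have "s k = mcomp V (mid V (tpow V C k)) (s k)"
    using comp_id_left[OF cat s_hom] by simp
  also have "\<dots> = tpowm V (s 1) k"
    unfolding chi_ones
    using comp_id_right[OF cat hom_tpowm[OF V s_hom[of 1]]] tpow_one[OF V] by simp
  finally show ?thesis .
qed

theorem mainTheorem4:
  fixes V :: "('o, 'm) mcat"
  assumes "colax_Monoidal V"
    and "coalg V C D" and "coalg V G E"
  shows "(\<forall>t t'. coalg_mor V C D G E t \<longrightarrow> coalg_mor V C D G E t' \<longrightarrow>
              (\<forall>k. tpowm V t k = tpowm V t' k) \<longrightarrow> t = t')
       \<and> (\<forall>s. hcoalg_mor V (assoc_ob V C) (assoc_mor V C D) (assoc_chi V C)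
                            (assoc_ob V G) (assoc_mor V G E) (assoc_chi V G) s \<longrightarrow>
              (\<exists>t. coalg_mor V C D G E t \<and> (\<forall>k. s k = tpowm V t k)))"
proof (intro conjI allI impI)
  fix t t' assume "\<forall>k. tpowm V t k = tpowm V t' k"
  then show "t = t'" using tpowm_one[OF assms(1)] by metis
next
  fix s
  assume s: "hcoalg_mor V (assoc_ob V C) (assoc_mor V C D) (assoc_chi V C)
                          (assoc_ob V G) (assoc_mor V G E) (assoc_chi V G) s"
  have "C \<in> mob V" "G \<in> mob V" using assms(2,3) unfolding coalg_def by blast+
  then have s_tpowm: "s k = tpowm V (s 1) k" for k
    using hcoalg_mor_assoc_tpowm[OF assms(1) _ _ s] by blast
  have "hom V C G (s 1)"
    using s tpow_one[OF assms(1)] unfolding hcoalg_mor_def assoc_ob_def by metis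
  moreover have "mcomp V (D n) (tpowm V (s 1) n) = mcomp V (s 1) (E n)" for n
    using s osk_oterm[of n] s_tpowm[of n] assoc_mor_oterm[OF assms(1)] assms(2,3)
    unfolding hcoalg_mor_def by metis
  ultimately have "coalg_mor V C D G E (s 1)" unfolding coalg_mor_def by blast
  then show "\<exists>t. coalg_mor V C D G E t \<and> (\<forall>k. s k = tpowm V t k)"
    using s_tpowm by blast
qed

end
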